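(* For every integer $n\geq 4$, the $2$-extra edge-connectivity of the $n$-dimensional augmented cube satisfies $\lambda_2(AQ_n)=6n-9$.
   Context: The $n$-dimensional augmented cube $AQ_n$ has vertex set $\{0,1\}^n$, vertices written as strings $X=x_nx_{n-1}\cdots x_1$. For $1\le i\le n$ let $X_i=x_n\cdots x_{i+1}\bar x_i x_{i-1}\cdots x_1$ (flip bit $i$) and $\overline{X}_i=x_n\cdots x_{i+1}\bar x_i\bar x_{i-1}\cdots\bar x_1$ (flip bits $i,i-1,\dots,1$), where $\bar x=1-x$. Two distinct vertices $X,Y$ are adjacent iff $Y=X_i$ for some $1\le i\le n$ or $Y=\overline{X}_i$ for some $2\le i\le n$. For a graph $G$ and integer $h\ge0$, an edge set $F\subseteq E(G)$ is an $h$-edge-cut if $G-F$ is disconnected and every component of $G-F$ has more than $h$ vertices; the $h$-extra edge-connectivity $\lambda_h(G)$ is the minimum cardinality of an $h$-edge-cut of $G$. *)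

theory Defs
  imports Main
begin

text \<open>Vertices of AQ_n: binary strings x_n ... x_1 encoded as the set of positions
  i in {1..n} with x_i = 1.\<close>

definition AQ_vertices :: "nat \<Rightarrow> nat set set" where
  "AQ_vertices n = Pow {1..n}"

definition flip_bit :: "nat set \<Rightarrow> nat \<Rightarrow> nat set" where
  "flip_bit X i = (X - {i}) \<union> ({i} - X)"

definition flip_upto :: "nat set \<Rightarrow> nat \<Rightarrow> nat set" where
  "flip_upto X i = (X - {1..i}) \<union> ({1..i} - X)"

definition AQ_adj :: "nat \<Rightarrow> nat set \<Rightarrow> nat set \<Rightarrow> bool" where
  "AQ_adj n X Y \<longleftrightarrow> X \<in> AQ_vertices n \<and> Y \<in> AQ_vertices n \<and> X \<noteq> Y \<and>
     ((\<exists>i\<in>{1..n}. Y = flip_bit X i) \<or> (\<exists>i\<in>{2..n}. Y = flip_upto X i))"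

definition AQ_edges :: "nat \<Rightarrow> nat set set set" where
  "AQ_edges n = {{X, Y} | X Y. AQ_adj n X Y}"

definition edge_rel :: "'a set set \<Rightarrow> ('a \<times> 'a) set" where
  "edge_rel E = {(x, y). {x, y} \<in> E \<and> x \<noteq> y}"

definition component :: "'a set \<Rightarrow> 'a set set \<Rightarrow> 'a \<Rightarrow> 'a set" where
  "component V E x = {y \<in> V. (x, y) \<in> (edge_rel E)\<^sup>*}"

definition graph_connected :: "'a set \<Rightarrow> 'a set set \<Rightarrow> bool" where
  "graph_connected V E \<longleftrightarrow> (\<forall>x\<in>V. \<forall>y\<in>V. (x, y) \<in> (edge_rel E)\<^sup>*)"

definition h_edge_cut :: "'a set \<Rightarrow> 'a set set \<Rightarrow> nat \<Rightarrow> 'a set set \<Rightarrow> bool" where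
  "h_edge_cut V E h F \<longleftrightarrow> F \<subseteq> E \<and> \<not> graph_connected V (E - F) \<and>
     (\<forall>x\<in>V. card (component V (E - F) x) > h)"

definition extra_edge_connectivity :: "'a set \<Rightarrow> 'a set set \<Rightarrow> nat \<Rightarrow> nat" where
  "extra_edge_connectivity V E h = (LEAST k. \<exists>F. h_edge_cut V E h F \<and> card F = k)"

end

theory Submission
  imports Defs
begin

text \<open>
  AQ_n is the Cayley graph of the group of subsets of {1..n} under symmetric difference
  (written X + D below), generated by the 2n - 1 sets {i} and {1..i}. Counting the boundary
  edges of a vertex set S as pairs (X, D) with X in S and X + D outside S gives the small-set
  bound |dS| \<ge> |S| (2n - |S|), and splitting AQ_(m+1) by the top coordinate into two copies
  of AQ_m joined by two perfect matchings gives |dS| \<ge> |dS0| + |dS1| + 2 ||S0| - |S1||.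
  An induction starting at AQ_3 turns these into |dS| \<ge> 6n - 9 whenever n \<ge> 4 and
  3 \<le> |S| \<le> 2^n - 3. A 2-extra edge-cut contains the boundary of a component it leaves,
  which is such a set; conversely the boundary of the triangle {{}, {1}, {2}} is a 2-extra
  edge-cut of that size.
\<close>

lemma sym_diff_cancel_right: "sym_diff (sym_diff A B) B = A"
  by blast

lemma sym_diff_eq_iff_right: "sym_diff A D = sym_diff B D \<longleftrightarrow> A = B"
  by blast

lemma sym_diff_eq_iff_left: "sym_diff X A = sym_diff X B \<longleftrightarrow> A = B"
  by blast

lemma sym_diff_cancel_left: "sym_diff A (sym_diff A B) = B"
  by blast

lemma sym_diff_commute: "sym_diff A B = sym_diff B A"
  by blast

lemma sym_diff_eq_self_iff: "sym_diff X D = X \<longleftrightarrow> D = {}"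
  by blast

lemma sym_diff_swap: "sym_diff (sym_diff X T) D = sym_diff (sym_diff X D) T"
  by blast

lemma image_sym_diff_eq: "(\<lambda>X. sym_diff X T) ` S = {Y. sym_diff Y T \<in> S}"
proof (intro set_eqI iffI)
  fix Y
  show "Y \<in> (\<lambda>X. sym_diff X T) ` S \<Longrightarrow> Y \<in> {Y. sym_diff Y T \<in> S}"
    by (auto simp: sym_diff_cancel_right)
  show "Y \<in> {Y. sym_diff Y T \<in> S} \<Longrightarrow> Y \<in> (\<lambda>X. sym_diff X T) ` S"
    by (rule image_eqI[of _ _ "sym_diff Y T"]) (simp_all add: sym_diff_cancel_right)
qed

section \<open>Boundaries in Cayley graphs of the group of sets\<close>

text \<open>The number of edges leaving S in the Cayley graph with generators G: the edge
  from X to X + D is recorded by the pair (X, D).\<close>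

definition cayley_boundary :: "'a set set \<Rightarrow> 'a set set \<Rightarrow> nat" where
  "cayley_boundary G S = card {(X, D) \<in> S \<times> G. sym_diff X D \<notin> S}"

lemma finite_pairs_in_product:
  "finite S \<Longrightarrow> finite G \<Longrightarrow> finite {(X, D) \<in> S \<times> G. P X D}"
  by (rule finite_subset[of _ "S \<times> G"]) auto

lemma cayley_boundary_Un_gens:
  assumes "finite S" "finite G" "finite H" "G \<inter> H = {}"
  shows "cayley_boundary (G \<union> H) S = cayley_boundary G S + cayley_boundary H S"
proof -
  have eq: "{(X, D) \<in> S \<times> (G \<union> H). sym_diff X D \<notin> S} =
        {(X, D) \<in> S \<times> G. sym_diff X D \<notin> S} \<union> {(X, D) \<in> S \<times> H. sym_diff X D \<notin> S}"
    by auto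
  show ?thesis
    unfolding cayley_boundary_def eq
    by (intro card_Un_disjoint finite_pairs_in_product assms) (use assms(4) in blast)
qed

lemma cayley_boundary_split:
  assumes "finite S" "finite G" "\<And>D. D \<in> G \<Longrightarrow> k \<notin> D"
  shows "cayley_boundary G S = cayley_boundary G {X \<in> S. k \<notin> X} + cayley_boundary G {X \<in> S. k \<in> X}"
proof -
  have eq: "{(X, D) \<in> S \<times> G. sym_diff X D \<notin> S} =
        {(X, D) \<in> {X \<in> S. k \<notin> X} \<times> G. sym_diff X D \<notin> {X \<in> S. k \<notin> X}} \<union>
        {(X, D) \<in> {X \<in> S. k \<in> X} \<times> G. sym_diff X D \<notin> {X \<in> S. k \<in> X}}"
    using assms(3) by blast
  show ?thesis
    unfolding cayley_boundary_def eq
    by (intro card_Un_disjoint finite_pairs_in_product assms) (use assms(1) in auto)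
qed

lemma cayley_boundary_translate:
  "cayley_boundary G ((\<lambda>X. sym_diff X T) ` S) = cayley_boundary G S"
proof -
  have "bij_betw (\<lambda>(X, D). (sym_diff X T, D))
          {(X, D) \<in> S \<times> G. sym_diff X D \<notin> S}
          {(X, D) \<in> {Y. sym_diff Y T \<in> S} \<times> G. sym_diff X D \<notin> {Y. sym_diff Y T \<in> S}}"
    by (rule bij_betw_byWitness[where f' = "\<lambda>(X, D). (sym_diff X T, D)"]) (auto simp: sym_diff_swap sym_diff_cancel_right)
  then show ?thesis
    unfolding cayley_boundary_def image_sym_diff_eq by (rule bij_betw_same_card[symmetric])
qed

lemma cayley_boundary_complement:
  assumes "S \<subseteq> Pow U" "\<And>D. D \<in> G \<Longrightarrow> D \<subseteq> U"
  shows "cayley_boundary G (Pow U - S) = cayley_boundary G S"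
proof -
  have "bij_betw (\<lambda>(X, D). (sym_diff X D, D))
          {(X, D) \<in> S \<times> G. sym_diff X D \<notin> S} {(X, D) \<in> (Pow U - S) \<times> G. sym_diff X D \<notin> Pow U - S}"
    by (rule bij_betw_byWitness[where f' = "\<lambda>(X, D). (sym_diff X D, D)"]) (use assms in \<open>auto simp: sym_diff_cancel_right\<close>)
  then show ?thesis
    unfolding cayley_boundary_def by (rule bij_betw_same_card[symmetric])
qed

lemma card_times_eq_cayley_boundary_plus_inner:
  assumes "finite S" "finite G"
  shows "card S * card G = cayley_boundary G S + card {(X, D) \<in> S \<times> G. sym_diff X D \<in> S}"
proof -
  have eq: "S \<times> G = {(X, D) \<in> S \<times> G. sym_diff X D \<notin> S} \<union> {(X, D) \<in> S \<times> G. sym_diff X D \<in> S}"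
    by blast
  have "card (S \<times> G) = cayley_boundary G S + card {(X, D) \<in> S \<times> G. sym_diff X D \<in> S}"
    unfolding cayley_boundary_def by (subst eq, intro card_Un_disjoint finite_pairs_in_product assms) auto
  then show ?thesis
    by (simp add: card_cartesian_product)
qed

lemma cayley_boundary_ge_small:
  assumes "finite S" "finite G" "{} \<notin> G"
  shows "card S * (card G + 1 - card S) \<le> cayley_boundary G S"
proof -
  let ?inner = "{(X, D) \<in> S \<times> G. sym_diff X D \<in> S}"
  let ?offdiag = "S \<times> S - (\<lambda>X. (X, X)) ` S"
  have "inj_on (\<lambda>(X, D). (X, sym_diff X D)) ?inner"
    by (auto simp: inj_on_def sym_diff_eq_iff_left)
  moreover have "(\<lambda>(X, D). (X, sym_diff X D)) ` ?inner \<subseteq> ?offdiag"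
    using assms(3) by (auto simp: sym_diff_eq_self_iff)
  ultimately have "card ?inner \<le> card ?offdiag"
    by (intro card_inj_on_le) (use assms(1) in auto)
  also have "card ?offdiag = card S * card S - card S"
    using assms(1) by (subst card_Diff_subset) (auto simp: card_cartesian_product card_image inj_on_def)
  finally have "card ?inner + card S \<le> card S * card S"
    using le_square[of "card S"] by linarith
  moreover have "card S * (card G + 1 - card S) = card S * card G + card S - card S * card S"
    by (simp add: diff_mult_distrib2)
  ultimately show ?thesis
    using card_times_eq_cayley_boundary_plus_inner[OF assms(1,2)] by linarith
qed

lemma cayley_boundary_ge_cross:
  assumes "finite S" "finite H" "A \<subseteq> S" "\<And>X D. X \<in> A \<Longrightarrow> D \<in> H \<Longrightarrow> sym_diff X D \<notin> A"
  shows "card H * card A \<le> cayley_boundary H S + card H * card (S - A)"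
proof -
  let ?out = "{(X, D) \<in> A \<times> H. sym_diff X D \<notin> S}"
  let ?back = "{(X, D) \<in> A \<times> H. sym_diff X D \<in> S}"
  have eq: "A \<times> H = ?out \<union> ?back"
    by blast
  have "card (A \<times> H) \<le> card ?out + card ?back"
    by (subst eq) (rule card_Un_le)
  moreover have "card ?out \<le> cayley_boundary H S"
    unfolding cayley_boundary_def
    by (intro card_mono finite_pairs_in_product assms(1,2)) (use assms(3) in auto)
  moreover have "card ?back \<le> card ((S - A) \<times> H)"
  proof (rule card_inj_on_le)
    show "inj_on (\<lambda>(X, D). (sym_diff X D, D)) ?back"
      by (auto simp: inj_on_def sym_diff_eq_iff_right)
    show "(\<lambda>(X, D). (sym_diff X D, D)) ` ?back \<subseteq> (S - A) \<times> H"
      using assms(4) by auto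
  qed (use assms(1,2) in simp)
  ultimately show ?thesis
    by (simp add: card_cartesian_product mult.commute)
qed

section \<open>The augmented cube as a Cayley graph\<close>

definition AQ_gens :: "nat \<Rightarrow> nat set set" where
  "AQ_gens n = (\<lambda>i. {i}) ` {1..n} \<union> (\<lambda>i. {1..i}) ` {2..n}"

abbreviation AQ_boundary :: "nat \<Rightarrow> nat set set \<Rightarrow> nat" where
  "AQ_boundary n S \<equiv> cayley_boundary (AQ_gens n) S"

lemma AQ_gens_subset: "D \<in> AQ_gens n \<Longrightarrow> D \<subseteq> {1..n}"
  by (auto simp: AQ_gens_def)

lemma empty_notin_AQ_gens: "{} \<notin> AQ_gens n"
  by (auto simp: AQ_gens_def)

lemma finite_AQ_gens [simp]: "finite (AQ_gens n)"
  by (simp add: AQ_gens_def)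

lemma card_AQ_gens:
  assumes "n \<ge> 1"
  shows "card (AQ_gens n) = 2 * n - 1"
proof -
  have "inj_on (\<lambda>i::nat. {i}) {1..n}" "inj_on (\<lambda>i::nat. {1..i}) {2..n}"
    by (auto simp: inj_on_def)
  moreover have "{i} \<noteq> {1..j}" if "2 \<le> j" for i j :: nat
  proof
    assume "{i} = {1..j}"
    then have "1 \<in> {i}" "2 \<in> {i}"
      using that by auto
    then show False
      by simp
  qed
  then have "(\<lambda>i::nat. {i}) ` {1..n} \<inter> (\<lambda>i. {1..i}) ` {2..n} = {}"
    by auto
  ultimately show ?thesis
    using assms unfolding AQ_gens_def by (simp add: card_Un_disjoint card_image)
qed

lemma AQ_gens_Suc:
  assumes "n \<ge> 1"
  shows "AQ_gens (Suc n) = AQ_gens n \<union> {{Suc n}, {1..Suc n}}"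
proof -
  have "{1..Suc n} = insert (Suc n) {1..n}" "{2..Suc n} = insert (Suc n) {2..n}"
    using assms by auto
  then show ?thesis
    unfolding AQ_gens_def by auto
qed

lemma AQ_adj_iff: "AQ_adj n X Y \<longleftrightarrow> X \<subseteq> {1..n} \<and> Y \<subseteq> {1..n} \<and> sym_diff X Y \<in> AQ_gens n"
proof -
  have "Y = sym_diff X D \<longleftrightarrow> sym_diff X Y = D" for D
    by blast
  then show ?thesis
    unfolding AQ_adj_def AQ_vertices_def flip_bit_def flip_upto_def AQ_gens_def
    by (auto simp: sym_diff_eq_self_iff)
qed

lemma AQ_boundary_ge_card_mult:
  assumes "n \<ge> 1" "S \<subseteq> Pow {1..n}" "k = card S \<or> k = 2 ^ n - card S"
  shows "2 * n * k \<le> AQ_boundary n S + k * k"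
proof -
  have bound: "2 * n * card T \<le> AQ_boundary n T + card T * card T" if "T \<subseteq> Pow {1..n}" for T
  proof -
    have "card T * (2 * n - card T) \<le> AQ_boundary n T"
      using cayley_boundary_ge_small[OF finite_subset[OF that] finite_AQ_gens[of n] empty_notin_AQ_gens[of n]]
        card_AQ_gens[OF assms(1)] assms(1) by simp
    then show ?thesis
      by (simp add: diff_mult_distrib2 algebra_simps)
  qed
  have "AQ_boundary n (Pow {1..n} - S) = AQ_boundary n S"
    using assms(2) by (rule cayley_boundary_complement) (rule AQ_gens_subset)
  moreover have "card (Pow {1..n} - S) = 2 ^ n - card S"
    using assms(2) by (simp add: card_Diff_subset finite_subset card_Pow)
  ultimately show ?thesis
    using assms(3) bound[OF assms(2)] bound[of "Pow {1..n} - S"] by auto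
qed

text \<open>The generators of AQ_m act inside each half {X. m + 1 \<notin> X} and {X. m + 1 \<in> X} of
  AQ_(m+1), while the new ones {m + 1} and {1..m + 1} are two perfect matchings between
  the halves.\<close>

lemma AQ_boundary_Suc_eq:
  assumes "m \<ge> 1" "finite S"
  shows "AQ_boundary (Suc m) S = AQ_boundary m {X \<in> S. Suc m \<notin> X} + AQ_boundary m {X \<in> S. Suc m \<in> X}
    + cayley_boundary {{Suc m}, {1..Suc m}} S"
proof -
  have gens_new: "D \<in> AQ_gens m \<Longrightarrow> Suc m \<notin> D" for D
    using AQ_gens_subset by fastforce
  have "AQ_boundary (Suc m) S = AQ_boundary m S + cayley_boundary {{Suc m}, {1..Suc m}} S"
    unfolding AQ_gens_Suc[OF assms(1)]
    by (rule cayley_boundary_Un_gens) (use assms(2) in \<open>auto dest: gens_new\<close>)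
  also have "AQ_boundary m S = AQ_boundary m {X \<in> S. Suc m \<notin> X} + AQ_boundary m {X \<in> S. Suc m \<in> X}"
    by (rule cayley_boundary_split) (use assms(2) gens_new in auto)
  finally show ?thesis .
qed

lemma AQ_boundary_Suc_halves:
  assumes "m \<ge> 1" "S \<subseteq> Pow {1..Suc m}"
  obtains S0 S1 where "S0 \<subseteq> Pow {1..m}" "S1 \<subseteq> Pow {1..m}" "card S0 + card S1 = card S"
    "AQ_boundary m S0 + AQ_boundary m S1 + 2 * card S0 \<le> AQ_boundary (Suc m) S + 2 * card S1"
    "AQ_boundary m S0 + AQ_boundary m S1 + 2 * card S1 \<le> AQ_boundary (Suc m) S + 2 * card S0"
proof -
  define S0 where "S0 = {X \<in> S. Suc m \<notin> X}"
  define S1' where "S1' = {X \<in> S. Suc m \<in> X}"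
  define S1 where "S1 = (\<lambda>X. sym_diff X {Suc m}) ` S1'"
  define H where "H = {{Suc m}, {1..Suc m}}"
  have fin: "finite S" "finite S1'"
    using assms(2) by (auto simp: S1'_def intro: finite_subset)
  have parts: "S - S0 = S1'" "S - S1' = S0"
    unfolding S0_def S1'_def by auto
  have card_S1: "card S1 = card S1'"
    unfolding S1_def by (rule card_image) (auto simp: inj_on_def sym_diff_eq_iff_right)
  have "S0 \<subseteq> S"
    by (simp add: S0_def)
  then have card_S: "card S = card S0 + card S1'"
    using card_Diff_subset[of S0 S] card_mono[of S S0] fin(1) parts(1) finite_subset by fastforce
  have split: "AQ_boundary (Suc m) S = AQ_boundary m S0 + AQ_boundary m S1 + cayley_boundary H S"
    unfolding S0_def S1_def S1'_def H_def cayley_boundary_translate by (rule AQ_boundary_Suc_eq[OF assms(1) fin(1)])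
  have "1 \<in> {1..Suc m}" "1 \<notin> {Suc m}"
    using assms(1) by auto
  then have "card H = 2"
    unfolding H_def by (metis card_2_iff)
  moreover have "card H * card S0 \<le> cayley_boundary H S + card H * card (S - S0)"
    by (rule cayley_boundary_ge_cross) (use fin in \<open>auto simp: S0_def H_def\<close>)
  moreover have "card H * card S1' \<le> cayley_boundary H S + card H * card (S - S1')"
    by (rule cayley_boundary_ge_cross) (use fin in \<open>auto simp: S1'_def H_def\<close>)
  ultimately have cross: "2 * card S0 \<le> cayley_boundary H S + 2 * card S1"
    "2 * card S1 \<le> cayley_boundary H S + 2 * card S0"
    using parts card_S1 by simp_all
  show thesis
  proof (rule that)
    show "S0 \<subseteq> Pow {1..m}" "S1 \<subseteq> Pow {1..m}"
      using assms(2) by (auto simp: S0_def S1_def S1'_def subset_iff le_Suc_eq)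
  qed (use card_S card_S1 split cross in simp_all)
qed

section \<open>The isoperimetric bound\<close>

text \<open>The value 6m - 10 instead of 6m - 9 in the last case makes it valid
  already in AQ_3, where a 4-set can have only 8 boundary edges.\<close>

definition iso_bound :: "nat \<Rightarrow> nat \<Rightarrow> nat" where
  "iso_bound m k = (let j = min k (2 ^ m - k) in
     if j = 0 then 0 else if j = 1 then 2 * m - 1 else if j = 2 then 4 * m - 4 else 6 * m - 10)"

lemma three_mult_le_power_two: "m \<ge> 3 \<Longrightarrow> 3 * m \<le> 2 ^ m + (1::nat)"
  by (induction m rule: nat_induct_at_least) auto

lemma iso_bound_cases:
  assumes "m \<ge> 2" "k \<le> 2 ^ m"
  shows "(k = 0 \<or> k = 2 ^ m) \<and> iso_bound m k = 0 \<or>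
    (k = 1 \<or> k + 1 = 2 ^ m) \<and> iso_bound m k + 1 = 2 * m \<or>
    (k = 2 \<or> k + 2 = 2 ^ m) \<and> iso_bound m k + 4 = 4 * m \<or>
    3 \<le> k \<and> k + 3 \<le> 2 ^ m \<and> iso_bound m k + 10 = 6 * m"
  using assms by (auto simp: iso_bound_def Let_def min_def)

lemma iso_bound_Suc:
  assumes "m \<ge> 3" "a \<le> 2 ^ m" "b \<le> 2 ^ m" "5 \<le> a + b" "a + b + 5 \<le> 2 ^ Suc m"
    "iso_bound m a + iso_bound m b + 2 * a \<le> t + 2 * b"
    "iso_bound m a + iso_bound m b + 2 * b \<le> t + 2 * a"
  shows "6 * Suc m \<le> t + 9"
proof -
  have "m \<ge> 2"
    using assms(1) by simp
  then show ?thesis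
    using iso_bound_cases[OF _ assms(2)] iso_bound_cases[OF _ assms(3)] assms
      three_mult_le_power_two[OF assms(1)] power_Suc[of "2::nat" m]
    by (auto; linarith)
qed

lemma iso_bound_le_AQ_boundary_small:
  assumes "m \<ge> 3" "S \<subseteq> Pow {1..m}" "card S \<le> 4 \<or> 2 ^ m \<le> card S + 4"
  shows "iso_bound m (card S) \<le> AQ_boundary m S"
proof -
  define k where "k = min (card S) (2 ^ m - card S)"
  have "k = card S \<or> k = 2 ^ m - card S"
    by (simp add: k_def min_def)
  then have "2 * m * k \<le> AQ_boundary m S + k * k"
    using assms(1,2) by (intro AQ_boundary_ge_card_mult) auto
  moreover have "k = 0 \<or> k = 1 \<or> k = 2 \<or> k = 3 \<or> k = 4"
    using assms(3) by (auto simp: k_def)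
  moreover have "iso_bound m (card S) =
      (if k = 0 then 0 else if k = 1 then 2 * m - 1 else if k = 2 then 4 * m - 4 else 6 * m - 10)"
    by (simp add: iso_bound_def Let_def flip: k_def)
  ultimately show ?thesis
    using assms(1) by (elim disjE) simp_all
qed

lemma AQ_boundary_ge_small:
  assumes "n \<ge> 4" "S \<subseteq> Pow {1..n}" "3 \<le> card S" "card S + 3 \<le> 2 ^ n"
    "card S \<le> 4 \<or> 2 ^ n \<le> card S + 4"
  shows "6 * n \<le> AQ_boundary n S + 9"
proof -
  define k where "k = min (card S) (2 ^ n - card S)"
  have "k = card S \<or> k = 2 ^ n - card S"
    by (simp add: k_def min_def)
  then have "2 * n * k \<le> AQ_boundary n S + k * k"
    using assms(1,2) by (intro AQ_boundary_ge_card_mult) auto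
  moreover have "k = 3 \<or> k = 4"
    using assms(3-5) by (auto simp: k_def)
  ultimately show ?thesis
    using assms(1) by (elim disjE) simp_all
qed

lemma AQ_boundary_Suc_ge:
  assumes "m \<ge> 3" "S \<subseteq> Pow {1..Suc m}" "5 \<le> card S" "card S + 5 \<le> 2 ^ Suc m"
    and lower: "\<And>T. T \<subseteq> Pow {1..m} \<Longrightarrow> iso_bound m (card T) \<le> AQ_boundary m T"
  shows "6 * Suc m \<le> AQ_boundary (Suc m) S + 9"
proof -
  obtain S0 S1 where parts: "S0 \<subseteq> Pow {1..m}" "S1 \<subseteq> Pow {1..m}" "card S0 + card S1 = card S"
    and bound: "AQ_boundary m S0 + AQ_boundary m S1 + 2 * card S0 \<le> AQ_boundary (Suc m) S + 2 * card S1"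
      "AQ_boundary m S0 + AQ_boundary m S1 + 2 * card S1 \<le> AQ_boundary (Suc m) S + 2 * card S0"
    using AQ_boundary_Suc_halves[OF _ assms(2)] assms(1) by auto
  have "card S0 \<le> 2 ^ m" "card S1 \<le> 2 ^ m"
    using card_mono[OF _ parts(1)] card_mono[OF _ parts(2)] by (simp_all add: card_Pow)
  then show ?thesis
    by (rule iso_bound_Suc[OF assms(1)])
      (use assms(3,4) parts(3) bound lower[OF parts(1)] lower[OF parts(2)] in linarith)+
qed

lemma AQ_boundary_ge_iso_bound:
  assumes "m \<ge> 3" "S \<subseteq> Pow {1..m}"
  shows "iso_bound m (card S) \<le> AQ_boundary m S"
  using assms
proof (induction m arbitrary: S rule: nat_induct_at_least)
  case base
  have "card S \<le> 2 ^ 3"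
    using card_mono[OF _ base] by (simp add: card_Pow)
  then show ?case
    by (intro iso_bound_le_AQ_boundary_small base) auto
next
  case (Suc m)
  show ?case
  proof (cases "card S \<le> 4 \<or> 2 ^ Suc m \<le> card S + 4")
    case True
    then show ?thesis
      using Suc by (intro iso_bound_le_AQ_boundary_small) auto
  next
    case False
    then have "iso_bound (Suc m) (card S) + 10 = 6 * Suc m"
      using iso_bound_cases[of "Suc m" "card S"] Suc.hyps by auto
    moreover have "6 * Suc m \<le> AQ_boundary (Suc m) S + 9"
      using False Suc by (intro AQ_boundary_Suc_ge) auto
    ultimately show ?thesis
      by linarith
  qed
qed

lemma AQ_boundary_ge:
  assumes "n \<ge> 4" "S \<subseteq> Pow {1..n}" "3 \<le> card S" "card S + 3 \<le> 2 ^ n"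
  shows "6 * n \<le> AQ_boundary n S + 9"
proof (cases "card S \<le> 4 \<or> 2 ^ n \<le> card S + 4")
  case True
  then show ?thesis
    using assms by (intro AQ_boundary_ge_small) auto
next
  case False
  define m where "m = n - 1"
  have m: "n = Suc m" "m \<ge> 3"
    using assms(1) by (simp_all add: m_def)
  have "6 * Suc m \<le> AQ_boundary (Suc m) S + 9"
    using False assms unfolding m(1) by (intro AQ_boundary_Suc_ge AQ_boundary_ge_iso_bound m(2)) auto
  then show ?thesis
    by (simp add: m(1))
qed

section \<open>Extra edge-cuts\<close>

definition edge_boundary :: "'a set set \<Rightarrow> 'a set \<Rightarrow> 'a set set" where
  "edge_boundary E C = {e \<in> E. \<exists>x\<in>C. \<exists>y. y \<notin> C \<and> e = {x, y}}"

lemma doubleton_in_edge_boundary_iff: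
  "{x, y} \<in> edge_boundary E C \<longleftrightarrow> {x, y} \<in> E \<and> (x \<in> C \<longleftrightarrow> y \<notin> C)"
  by (auto simp: edge_boundary_def doubleton_eq_iff)

lemma rtrancl_edge_rel_edge_boundary_closed:
  assumes "(x, y) \<in> (edge_rel (E - edge_boundary E C))\<^sup>*" "x \<in> C"
  shows "y \<in> C"
  using assms by induction (auto simp: edge_rel_def doubleton_in_edge_boundary_iff)

lemma sym_edge_rel: "sym (edge_rel E)"
  by (auto simp: sym_def edge_rel_def insert_commute)

lemma in_component_minus_edge_boundary:
  assumes "x \<in> V" "y \<in> V" "{x, y} \<in> E" "x \<noteq> y" "x \<in> C \<longleftrightarrow> y \<in> C"
  shows "y \<in> component V (E - edge_boundary E C) x"
  using assms by (auto simp: component_def edge_rel_def doubleton_in_edge_boundary_iff)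

lemma edge_boundary_component_subset:
  assumes "\<And>u v. {u, v} \<in> E \<Longrightarrow> v \<in> V"
  shows "edge_boundary E (component V (E - F) x) \<subseteq> F"
proof
  fix e
  assume e: "e \<in> edge_boundary E (component V (E - F) x)"
  then obtain u v where uv: "e = {u, v}" "e \<in> E" "u \<in> component V (E - F) x" "v \<notin> component V (E - F) x"
    by (auto simp: edge_boundary_def)
  show "e \<in> F"
  proof (rule ccontr)
    assume "e \<notin> F"
    then have "(u, v) \<in> edge_rel (E - F)"
      using uv by (auto simp: edge_rel_def)
    moreover have "(x, u) \<in> (edge_rel (E - F))\<^sup>*" "v \<in> V"
      using uv assms by (auto simp: component_def)
    ultimately have "v \<in> component V (E - F) x"
      by (simp add: component_def)
    with uv show False
      by simp
  qed
qed

lemma h_edge_cut_obtain_component: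
  assumes "finite V" "h_edge_cut V E h F"
  obtains x where "x \<in> V" "h < card (component V (E - F) x)" "h < card (V - component V (E - F) x)"
proof -
  let ?R = "edge_rel (E - F)"
  obtain x y where xy: "x \<in> V" "y \<in> V" "(x, y) \<notin> ?R\<^sup>*"
    using assms(2) by (auto simp: h_edge_cut_def graph_connected_def)
  have "component V (E - F) y \<subseteq> V - component V (E - F) x"
  proof
    fix z
    assume "z \<in> component V (E - F) y"
    then have "z \<in> V" "(z, y) \<in> ?R\<^sup>*"
      using sym_edge_rel by (auto simp: component_def intro: symD[OF sym_rtrancl])
    with xy(3) show "z \<in> V - component V (E - F) x"
      by (auto simp: component_def intro: rtrancl_trans)
  qed
  then have "card (component V (E - F) y) \<le> card (V - component V (E - F) x)"
    using assms(1) by (intro card_mono) auto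
  then show thesis
    using assms(2) xy by (intro that[of x]) (auto simp: h_edge_cut_def)
qed

lemma doubleton_in_AQ_edges_iff: "{X, Y} \<in> AQ_edges n \<longleftrightarrow> AQ_adj n X Y"
  unfolding AQ_edges_def by (auto simp: doubleton_eq_iff AQ_adj_iff sym_diff_commute)

lemma card_AQ_edge_boundary:
  assumes "C \<subseteq> Pow {1..n}"
  shows "card (edge_boundary (AQ_edges n) C) = AQ_boundary n C"
proof -
  let ?pairs = "{(X, D) \<in> C \<times> AQ_gens n. sym_diff X D \<notin> C}"
  let ?edge = "\<lambda>(X, D). {X, sym_diff X D}"
  have inj: "inj_on ?edge ?pairs"
    by (auto simp: inj_on_def doubleton_eq_iff sym_diff_eq_iff_left)
  have image: "?edge ` ?pairs = edge_boundary (AQ_edges n) C"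
  proof (intro set_eqI iffI)
    fix e
    assume "e \<in> ?edge ` ?pairs"
    then obtain X D where "e = {X, sym_diff X D}" "X \<in> C" "D \<in> AQ_gens n" "sym_diff X D \<notin> C"
      by auto
    then show "e \<in> edge_boundary (AQ_edges n) C"
      using assms AQ_gens_subset[of D n]
      by (auto simp: doubleton_in_edge_boundary_iff doubleton_in_AQ_edges_iff AQ_adj_iff sym_diff_cancel_left)
  next
    fix e
    assume "e \<in> edge_boundary (AQ_edges n) C"
    then obtain X Y where "e = {X, Y}" "e \<in> AQ_edges n" "X \<in> C" "Y \<notin> C"
      by (auto simp: edge_boundary_def)
    then show "e \<in> ?edge ` ?pairs"
      by (intro image_eqI[of _ _ "(X, sym_diff X Y)"])
        (auto simp: doubleton_in_AQ_edges_iff AQ_adj_iff sym_diff_cancel_left)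
  qed
  show ?thesis
    unfolding cayley_boundary_def image[symmetric] by (rule card_image[OF inj])
qed

lemma finite_AQ_edges: "finite (AQ_edges n)"
proof (rule finite_subset)
  show "AQ_edges n \<subseteq> Pow (Pow {1..n})"
    by (auto simp: AQ_edges_def AQ_adj_iff)
qed simp

lemma AQ_edge_cut_card_ge:
  assumes "n \<ge> 4" "h_edge_cut (AQ_vertices n) (AQ_edges n) 2 F"
  shows "6 * n \<le> card F + 9"
proof -
  obtain x where x: "2 < card (component (AQ_vertices n) (AQ_edges n - F) x)"
    "2 < card (AQ_vertices n - component (AQ_vertices n) (AQ_edges n - F) x)"
    using h_edge_cut_obtain_component[OF _ assms(2)] by (auto simp: AQ_vertices_def)
  define C where "C = component (AQ_vertices n) (AQ_edges n - F) x"
  have C: "C \<subseteq> Pow {1..n}"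
    by (auto simp: C_def component_def AQ_vertices_def)
  have "card (Pow {1..n} - C) = 2 ^ n - card C"
    using C by (simp add: card_Diff_subset finite_subset card_Pow)
  then have "6 * n \<le> AQ_boundary n C + 9"
    using x C by (intro AQ_boundary_ge assms(1)) (auto simp: C_def AQ_vertices_def)
  also have "AQ_boundary n C = card (edge_boundary (AQ_edges n) C)"
    using card_AQ_edge_boundary[OF C] by simp
  also have "\<dots> \<le> card F"
  proof (rule card_mono)
    show "finite F"
      using assms(2) finite_AQ_edges finite_subset by (auto simp: h_edge_cut_def)
    show "edge_boundary (AQ_edges n) C \<subseteq> F"
      unfolding C_def by (rule edge_boundary_component_subset) (auto simp: doubleton_in_AQ_edges_iff AQ_adj_def)
  qed
  finally show ?thesis
    by simp
qed

lemma AQ_gens_triangle: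
  assumes "n \<ge> 2"
  shows "{1} \<in> AQ_gens n" "{2} \<in> AQ_gens n" "{1, 2} \<in> AQ_gens n"
proof -
  have "{1, 2} = {1..2::nat}"
    by auto
  then show "{1} \<in> AQ_gens n" "{2} \<in> AQ_gens n" "{1, 2} \<in> AQ_gens n"
    using assms unfolding AQ_gens_def by auto
qed

lemma AQ_boundary_triangle:
  assumes "n \<ge> 2"
  shows "AQ_boundary n {{}, {1}, {2}} + 9 \<le> 6 * n"
proof -
  let ?T = "{{}, {1}, {2}} :: nat set set"
  let ?inner = "{(X, D) \<in> ?T \<times> AQ_gens n. sym_diff X D \<in> ?T}"
  let ?six = "{({}, {1}), ({}, {2}), ({1}, {1}), ({1}, {1, 2}), ({2}, {2}), ({2}, {1, 2})} :: (nat set \<times> nat set) set"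
  have "card ?six = 6"
    by (simp add: doubleton_eq_iff)
  moreover have "card ?six \<le> card ?inner"
  proof (rule card_mono)
    show "finite ?inner"
      by (rule finite_pairs_in_product) simp_all
    show "?six \<subseteq> ?inner"
      using AQ_gens_triangle[OF assms] by auto
  qed
  ultimately have "6 \<le> card ?inner"
    by simp
  moreover have "card ?T * card (AQ_gens n) = AQ_boundary n ?T + card ?inner"
    by (rule card_times_eq_cayley_boundary_plus_inner) simp_all
  ultimately show ?thesis
    using card_AQ_gens[of n] assms by simp
qed

lemma AQ_adj_triangle:
  assumes "n \<ge> 2" "X \<in> {{}, {1}, {2}}" "Y \<in> {{}, {1}, {2}}" "X \<noteq> Y"
  shows "AQ_adj n X Y"
proof -
  have "sym_diff X Y \<in> {{1}, {2}, {1, 2}}"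
    using assms(2-4) by auto
  moreover have "{{1}, {2}, {1, 2}} \<subseteq> AQ_gens n"
    using AQ_gens_triangle[OF assms(1)] by simp
  ultimately have "sym_diff X Y \<in> AQ_gens n"
    by (rule subsetD[rotated])
  moreover have "X \<subseteq> {1..n}" "Y \<subseteq> {1..n}"
    using assms(1-3) by auto
  ultimately show ?thesis
    by (simp add: AQ_adj_iff)
qed

lemma AQ_adj_in_component:
  assumes "AQ_adj n x y" "x \<in> C \<longleftrightarrow> y \<in> C"
  shows "y \<in> component (AQ_vertices n) (AQ_edges n - edge_boundary (AQ_edges n) C) x"
proof (rule in_component_minus_edge_boundary)
  show "x \<in> AQ_vertices n" "y \<in> AQ_vertices n" "{x, y} \<in> AQ_edges n" "x \<noteq> y"
    using assms(1) by (auto simp: AQ_adj_def doubleton_in_AQ_edges_iff)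
qed (rule assms(2))

lemma card_component_AQ_triangle_cut:
  assumes "n \<ge> 4" "x \<in> AQ_vertices n"
  shows "2 < card (component (AQ_vertices n) (AQ_edges n - edge_boundary (AQ_edges n) {{}, {1}, {2}}) x)"
proof -
  let ?T = "{{}, {1}, {2}} :: nat set set"
  let ?K = "component (AQ_vertices n) (AQ_edges n - edge_boundary (AQ_edges n) ?T) x"
  have fin: "finite ?K"
    by (rule finite_subset[of _ "Pow {1..n}"]) (auto simp: component_def AQ_vertices_def)
  show ?thesis
  proof (cases "x \<in> ?T")
    case True
    have "?T \<subseteq> ?K"
    proof
      fix y
      assume y: "y \<in> ?T"
      show "y \<in> ?K"
      proof (cases "y = x")
        case True
        then show ?thesis
          using assms(2) by (simp add: component_def)
      next
        case False
        then have "AQ_adj n x y"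
          using \<open>x \<in> ?T\<close> y assms(1) by (intro AQ_adj_triangle) auto
        then show ?thesis
          by (rule AQ_adj_in_component) (use \<open>x \<in> ?T\<close> y in blast)
      qed
    qed
    then have "card ?T \<le> card ?K"
      by (rule card_mono[OF fin])
    then show ?thesis
      by simp
  next
    case False
    let ?N = "(\<lambda>D. sym_diff x D) ` AQ_gens n"
    have "card ?N = 2 * n - 1"
      using card_AQ_gens[of n] assms(1)
      by (subst card_image) (auto simp: inj_on_def sym_diff_eq_iff_left)
    then have "2 * n - 4 \<le> card (?N - ?T)"
      using diff_card_le_card_Diff[of ?T ?N] by simp
    also have "card (?N - ?T) \<le> card ?K"
    proof (rule card_mono[OF fin], rule subsetI)
      fix y
      assume "y \<in> ?N - ?T"
      then obtain D where D: "D \<in> AQ_gens n" "y = sym_diff x D" "y \<notin> ?T"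
        by blast
      have "x \<subseteq> {1..n}"
        using assms(2) by (simp add: AQ_vertices_def)
      with D have "AQ_adj n x y"
        using AQ_gens_subset[OF D(1)] by (auto simp: AQ_adj_iff sym_diff_cancel_left)
      with False D(3) show "y \<in> ?K"
        by (intro AQ_adj_in_component) auto
    qed
    finally show ?thesis
      using assms(1) by linarith
  qed
qed

lemma AQ_triangle_edge_cut:
  assumes "n \<ge> 4"
  shows "h_edge_cut (AQ_vertices n) (AQ_edges n) 2 (edge_boundary (AQ_edges n) {{}, {1}, {2}})"
proof -
  let ?T = "{{}, {1}, {2}} :: nat set set"
  have "({}, {3}) \<notin> (edge_rel (AQ_edges n - edge_boundary (AQ_edges n) ?T))\<^sup>*"
    using rtrancl_edge_rel_edge_boundary_closed[of "{}" "{3}" "AQ_edges n" ?T] by auto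
  moreover have "{} \<in> AQ_vertices n" "{3} \<in> AQ_vertices n"
    using assms by (auto simp: AQ_vertices_def)
  ultimately show ?thesis
    unfolding h_edge_cut_def graph_connected_def
    using card_component_AQ_triangle_cut[OF assms] by (auto simp: edge_boundary_def)
qed


theorem theorem3p2:
  fixes n :: nat
  assumes "n \<ge> 4"
  shows "extra_edge_connectivity (AQ_vertices n) (AQ_edges n) 2 = 6 * n - 9"
proof -
  let ?F = "edge_boundary (AQ_edges n) {{}, {1}, {2}}"
  have cut: "h_edge_cut (AQ_vertices n) (AQ_edges n) 2 ?F"
    by (rule AQ_triangle_edge_cut[OF assms])
  have "card ?F = AQ_boundary n {{}, {1}, {2}}"
    using assms by (intro card_AQ_edge_boundary) auto
  then have "card ?F + 9 \<le> 6 * n"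
    using AQ_boundary_triangle assms by simp
  moreover have "6 * n \<le> card ?F + 9"
    by (rule AQ_edge_cut_card_ge[OF assms cut])
  ultimately have "card ?F = 6 * n - 9"
    by linarith
  then show ?thesis
    unfolding extra_edge_connectivity_def
    using cut AQ_edge_cut_card_ge[OF assms] by (intro Least_equality) fastforce+
qed

end
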